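(* Let $G$ be a connected graph with minimum degree $\delta(G)\ge 2$. If $G$ has an independent $\Gamma$-set, then $\Gamma(G)=\Gamma_{\rm cer}(G)$.
   Context: All graphs are finite and simple; $\delta(G)$ is the minimum degree. A set $D\subseteq V_G$ is a dominating set of $G$ if every vertex of $V_G-D$ has a neighbor in $D$; $\Gamma(G)$ is the maximum cardinality of a minimal (with respect to inclusion) dominating set, and a $\Gamma$-set is a minimal dominating set of cardinality $\Gamma(G)$. A set $D$ is a certified dominating set of $G$ if $D$ is dominating and every vertex of $D$ has either zero or at least two neighbors in $V_G-D$; $\Gamma_{\rm cer}(G)$ is the maximum cardinality of a minimal (with respect to inclusion) certified dominating set. *)

theory Defs
  imports Main
begin

definition simple_graph :: "'a set \<Rightarrow> ('a \<Rightarrow> 'a \<Rightarrow> bool) \<Rightarrow> bool" where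
  "simple_graph V E \<longleftrightarrow> finite V \<and> (\<forall>u v. E u v \<longrightarrow> u \<in> V \<and> v \<in> V)
     \<and> (\<forall>u v. E u v \<longrightarrow> E v u) \<and> (\<forall>v. \<not> E v v)"

definition nbhd :: "'a set \<Rightarrow> ('a \<Rightarrow> 'a \<Rightarrow> bool) \<Rightarrow> 'a \<Rightarrow> 'a set" where
  "nbhd V E v = {u \<in> V. E v u}"

definition degree :: "'a set \<Rightarrow> ('a \<Rightarrow> 'a \<Rightarrow> bool) \<Rightarrow> 'a \<Rightarrow> nat" where
  "degree V E v = card (nbhd V E v)"

definition min_degree :: "'a set \<Rightarrow> ('a \<Rightarrow> 'a \<Rightarrow> bool) \<Rightarrow> nat" where
  "min_degree V E = Min (degree V E ` V)"

definition connected_graph :: "'a set \<Rightarrow> ('a \<Rightarrow> 'a \<Rightarrow> bool) \<Rightarrow> bool" where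
  "connected_graph V E \<longleftrightarrow> V \<noteq> {} \<and> (\<forall>u\<in>V. \<forall>v\<in>V. (\<lambda>x y. E x y)\<^sup>*\<^sup>* u v)"

definition independent_set :: "'a set \<Rightarrow> ('a \<Rightarrow> 'a \<Rightarrow> bool) \<Rightarrow> 'a set \<Rightarrow> bool" where
  "independent_set V E S \<longleftrightarrow> S \<subseteq> V \<and> (\<forall>u\<in>S. \<forall>v\<in>S. \<not> E u v)"

definition dominating_set :: "'a set \<Rightarrow> ('a \<Rightarrow> 'a \<Rightarrow> bool) \<Rightarrow> 'a set \<Rightarrow> bool" where
  "dominating_set V E D \<longleftrightarrow> D \<subseteq> V \<and> (\<forall>v \<in> V - D. \<exists>u\<in>D. E v u)"

definition minimal_dominating_set :: "'a set \<Rightarrow> ('a \<Rightarrow> 'a \<Rightarrow> bool) \<Rightarrow> 'a set \<Rightarrow> bool" where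
  "minimal_dominating_set V E D \<longleftrightarrow> dominating_set V E D \<and>
     (\<forall>D'. D' \<subset> D \<longrightarrow> \<not> dominating_set V E D')"

definition upper_domination :: "'a set \<Rightarrow> ('a \<Rightarrow> 'a \<Rightarrow> bool) \<Rightarrow> nat" where
  "upper_domination V E = Max (card ` {D. minimal_dominating_set V E D})"

definition Gamma_set :: "'a set \<Rightarrow> ('a \<Rightarrow> 'a \<Rightarrow> bool) \<Rightarrow> 'a set \<Rightarrow> bool" where
  "Gamma_set V E D \<longleftrightarrow> minimal_dominating_set V E D \<and> card D = upper_domination V E"

definition certified_dominating_set :: "'a set \<Rightarrow> ('a \<Rightarrow> 'a \<Rightarrow> bool) \<Rightarrow> 'a set \<Rightarrow> bool" where
  "certified_dominating_set V E D \<longleftrightarrow> dominating_set V E D \<and>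
     (\<forall>v\<in>D. card (nbhd V E v - D) = 0 \<or> card (nbhd V E v - D) \<ge> 2)"

definition minimal_certified_dominating_set :: "'a set \<Rightarrow> ('a \<Rightarrow> 'a \<Rightarrow> bool) \<Rightarrow> 'a set \<Rightarrow> bool" where
  "minimal_certified_dominating_set V E D \<longleftrightarrow> certified_dominating_set V E D \<and>
     (\<forall>D'. D' \<subset> D \<longrightarrow> \<not> certified_dominating_set V E D')"

definition upper_certified_domination :: "'a set \<Rightarrow> ('a \<Rightarrow> 'a \<Rightarrow> bool) \<Rightarrow> nat" where
  "upper_certified_domination V E = Max (card ` {D. minimal_certified_dominating_set V E D})"

end

theory Submission
  imports Defs
begin

text \<open>
  Every vertex of an independent \<open>\<Gamma>\<close>-set has all of its at least two neighbours outside
  the set, so such a set is a minimal certified dominating set and \<open>\<Gamma> \<le> \<Gamma>\<^sub>c\<^sub>e\<^sub>r\<close>.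
  Conversely, let \<open>D\<close> be a minimal certified dominating set and \<open>C\<close> the set of its vertices
  whose whole neighbourhood lies in \<open>D\<close>. If \<open>C \<noteq> {}\<close>, take a maximal independent set \<open>J\<close>
  among the vertices with at least two neighbours in \<open>C\<close>; then \<open>D - (C - J)\<close> is a smaller
  certified dominating set. So every vertex of \<open>D\<close> has at least two neighbours outside \<open>D\<close>,
  which makes every dominating subset of \<open>D\<close> certified; hence \<open>D\<close> is a minimal dominating
  set and \<open>\<Gamma>\<^sub>c\<^sub>e\<^sub>r \<le> \<Gamma>\<close>.
\<close>

lemma finite_nbhd: "simple_graph V E \<Longrightarrow> finite (nbhd V E v)"
  by (simp add: simple_graph_def nbhd_def)

lemma card_nbhd_ge_min_degree:
  assumes "simple_graph V E" "v \<in> V"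
  shows "min_degree V E \<le> card (nbhd V E v)"
  using assms by (simp add: simple_graph_def min_degree_def degree_def)

lemma ex_maximal_independent_subset:
  assumes "finite H" and sym: "\<And>u v. E u v \<Longrightarrow> E v u" and irrefl: "\<And>v. \<not> E v v"
  obtains J where "J \<subseteq> H" "\<forall>a\<in>J. \<forall>b\<in>J. \<not> E a b" "\<forall>c\<in>H - J. \<exists>j\<in>J. E c j"
proof -
  define S where "S = {J. J \<subseteq> H \<and> (\<forall>a\<in>J. \<forall>b\<in>J. \<not> E a b)}"
  have "finite S" "{} \<in> S"
    using \<open>finite H\<close> by (auto simp: S_def)
  then obtain J where J: "J \<in> S" and max: "\<And>J'. J' \<in> S \<Longrightarrow> J \<subseteq> J' \<Longrightarrow> J = J'"
    using finite_has_maximal[of S] by blast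
  have "\<exists>j\<in>J. E c j" if c: "c \<in> H - J" for c
  proof (rule ccontr)
    assume "\<not> (\<exists>j\<in>J. E c j)"
    then have "insert c J \<in> S"
      using J c sym irrefl by (auto simp: S_def)
    then show False
      using max[of "insert c J"] c by blast
  qed
  with J show thesis
    using that by (auto simp: S_def)
qed

lemma finite_dominating_sets:
  assumes "simple_graph V E"
  shows "finite {D. dominating_set V E D}"
  using assms by (auto simp: simple_graph_def dominating_set_def intro: finite_subset[of _ "Pow V"])

lemma finite_minimal_dominating_sets:
  "simple_graph V E \<Longrightarrow> finite {D. minimal_dominating_set V E D}"
  by (rule finite_subset[OF _ finite_dominating_sets]) (auto simp: minimal_dominating_set_def)

lemma finite_minimal_certified_dominating_sets:
  "simple_graph V E \<Longrightarrow> finite {D. minimal_certified_dominating_set V E D}"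
  by (rule finite_subset[OF _ finite_dominating_sets])
    (auto simp: minimal_certified_dominating_set_def certified_dominating_set_def)

lemma ex_minimal_certified_dominating_set:
  assumes "simple_graph V E"
  obtains D where "minimal_certified_dominating_set V E D"
proof -
  define S where "S = {D. certified_dominating_set V E D}"
  have "finite S"
    using finite_dominating_sets[OF assms]
    by (rule finite_subset[rotated]) (auto simp: S_def certified_dominating_set_def)
  moreover have "V \<in> S"
  proof -
    have "nbhd V E v - V = {}" for v
      by (auto simp: nbhd_def)
    then have "card (nbhd V E v - V) = 0" for v
      by (metis card.empty)
    then show ?thesis
      by (simp add: S_def certified_dominating_set_def dominating_set_def)
  qed
  ultimately obtain D where "D \<in> S" "\<And>D'. D' \<in> S \<Longrightarrow> D' \<subseteq> D \<Longrightarrow> D = D'"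
    using finite_has_minimal[of S] by blast
  then show thesis
    using that unfolding minimal_certified_dominating_set_def S_def by blast
qed

definition closed_vertices :: "'a set \<Rightarrow> ('a \<Rightarrow> 'a \<Rightarrow> bool) \<Rightarrow> 'a set \<Rightarrow> 'a set" where
  "closed_vertices V E D = {v \<in> D. nbhd V E v \<subseteq> D}"

lemma dominating_set_Diff_closed_vertices:
  fixes V D C :: "'a set" and E :: "'a \<Rightarrow> 'a \<Rightarrow> bool"
  defines "C \<equiv> closed_vertices V E D"
  assumes G: "simple_graph V E" and md: "2 \<le> min_degree V E" and dom: "dominating_set V E D"
    and JC: "J \<subseteq> C"
    and adj: "\<And>c. c \<in> C - J \<Longrightarrow> 2 \<le> card (nbhd V E c \<inter> C) \<Longrightarrow> \<exists>j\<in>J. E c j"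
  shows "dominating_set V E (D - (C - J))"
  unfolding dominating_set_def
proof (intro conjI ballI)
  show "D - (C - J) \<subseteq> V"
    using dom by (auto simp: dominating_set_def)
next
  fix x assume x: "x \<in> V - (D - (C - J))"
  show "\<exists>u\<in>D - (C - J). E x u"
  proof (cases "x \<in> D")
    case False
    then obtain u where u: "u \<in> D" "E x u"
      using dom x by (auto simp: dominating_set_def)
    then have "x \<in> nbhd V E u"
      using G x by (auto simp: nbhd_def simple_graph_def)
    with \<open>x \<notin> D\<close> have "u \<notin> C"
      by (auto simp: C_def closed_vertices_def)
    with u show ?thesis
      by blast
  next
    case True
    with x have xC: "x \<in> C - J"
      by blast
    show ?thesis
    proof (cases "2 \<le> card (nbhd V E x \<inter> C)")
      case True
      then obtain j where "j \<in> J" "E x j"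
        using adj xC by blast
      with JC show ?thesis
        by (auto simp: C_def closed_vertices_def)
    next
      case False
      have "2 \<le> card (nbhd V E x)"
        using card_nbhd_ge_min_degree[OF G] md x by (meson DiffD1 le_trans)
      with False have "\<not> nbhd V E x \<subseteq> C"
        by (metis Int_absorb2)
      then obtain u where "u \<in> nbhd V E x" "u \<notin> C"
        by blast
      moreover have "nbhd V E x \<subseteq> D"
        using xC by (auto simp: C_def closed_vertices_def)
      ultimately show ?thesis
        by (auto simp: nbhd_def)
    qed
  qed
qed

lemma certified_dominating_set_Diff_closed_vertices:
  fixes V D C :: "'a set" and E :: "'a \<Rightarrow> 'a \<Rightarrow> bool"
  defines "C \<equiv> closed_vertices V E D"
  assumes G: "simple_graph V E" and cert: "certified_dominating_set V E D"
    and indep: "\<forall>a\<in>J. \<forall>b\<in>J. \<not> E a b"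
    and JC: "J \<subseteq> C" and deg: "\<And>j. j \<in> J \<Longrightarrow> 2 \<le> card (nbhd V E j \<inter> C)"
    and dom: "dominating_set V E (D - (C - J))"
  shows "certified_dominating_set V E (D - (C - J))"
  unfolding certified_dominating_set_def
proof (intro conjI ballI dom)
  fix w assume w: "w \<in> D - (C - J)"
  have fin: "finite (nbhd V E w - (D - (C - J)))"
    using finite_nbhd[OF G] by simp
  show "card (nbhd V E w - (D - (C - J))) = 0 \<or> 2 \<le> card (nbhd V E w - (D - (C - J)))"
  proof (cases "w \<in> J")
    case True
    then have "nbhd V E w \<inter> C \<subseteq> nbhd V E w - (D - (C - J))"
      using indep by (auto simp: nbhd_def)
    then show ?thesis
      using deg[OF True] card_mono[OF fin] by (meson le_trans)
  next
    case False
    with w JC have "w \<in> D" "w \<notin> C"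
      by auto
    then have "nbhd V E w - D \<noteq> {}"
      by (auto simp: C_def closed_vertices_def)
    then have "2 \<le> card (nbhd V E w - D)"
      using cert \<open>w \<in> D\<close> finite_nbhd[OF G] by (auto simp: certified_dominating_set_def)
    moreover have "nbhd V E w - D \<subseteq> nbhd V E w - (D - (C - J))"
      by blast
    ultimately show ?thesis
      using card_mono[OF fin] by (meson le_trans)
  qed
qed

lemma closed_vertices_minimal_certified_eq_empty:
  assumes G: "simple_graph V E" and md: "2 \<le> min_degree V E"
    and M: "minimal_certified_dominating_set V E D"
  shows "closed_vertices V E D = {}"
proof (rule ccontr)
  define C where "C = closed_vertices V E D"
  define H where "H = {c \<in> C. 2 \<le> card (nbhd V E c \<inter> C)}"
  assume "closed_vertices V E D \<noteq> {}"
  then obtain c where c: "c \<in> C"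
    by (auto simp: C_def)
  have cert: "certified_dominating_set V E D"
    using M by (simp add: minimal_certified_dominating_set_def)
  then have CD: "C \<subseteq> D" and "D \<subseteq> V"
    by (auto simp: C_def closed_vertices_def certified_dominating_set_def dominating_set_def)
  then have "finite H"
    using G by (auto simp: H_def simple_graph_def intro: finite_subset)
  moreover have "\<And>u v. E u v \<Longrightarrow> E v u" and "\<And>v. \<not> E v v"
    using G by (auto simp: simple_graph_def)
  ultimately obtain J where JH: "J \<subseteq> H" and indep: "\<forall>a\<in>J. \<forall>b\<in>J. \<not> E a b"
    and adj: "\<forall>c\<in>H - J. \<exists>j\<in>J. E c j"
    by (rule ex_maximal_independent_subset)
  have JC: "J \<subseteq> C"
    using JH by (auto simp: H_def)
  have "C - J \<noteq> {}"
  proof (cases "c \<in> J")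
    case True
    then have "2 \<le> card (nbhd V E c \<inter> C)"
      using JH by (auto simp: H_def)
    then obtain d where "d \<in> nbhd V E c \<inter> C"
      by (metis card.empty ex_in_conv not_numeral_le_zero)
    with True indep show ?thesis
      by (auto simp: nbhd_def)
  qed (use c in blast)
  with CD have "D - (C - J) \<subset> D"
    using JC by blast
  moreover have "dominating_set V E (D - (C - J))"
    using dominating_set_Diff_closed_vertices[OF G md _ JC[unfolded C_def]] cert adj
    unfolding C_def[symmetric] H_def certified_dominating_set_def by blast
  then have "certified_dominating_set V E (D - (C - J))"
    using certified_dominating_set_Diff_closed_vertices[OF G cert indep JC[unfolded C_def]] JH
    unfolding C_def[symmetric] H_def by blast
  ultimately show False
    using M by (auto simp: minimal_certified_dominating_set_def)
qed

lemma card_nbhd_Diff_minimal_certified_ge_2: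
  assumes G: "simple_graph V E" and md: "2 \<le> min_degree V E"
    and M: "minimal_certified_dominating_set V E D" and "v \<in> D"
  shows "2 \<le> card (nbhd V E v - D)"
proof -
  have "nbhd V E v - D \<noteq> {}"
    using closed_vertices_minimal_certified_eq_empty[OF assms(1-3)] \<open>v \<in> D\<close>
    by (auto simp: closed_vertices_def)
  then have "card (nbhd V E v - D) \<noteq> 0"
    using finite_nbhd[OF G] by simp
  with M \<open>v \<in> D\<close> show ?thesis
    by (auto simp: minimal_certified_dominating_set_def certified_dominating_set_def)
qed

lemma certified_dominating_set_subset:
  assumes G: "simple_graph V E" and "D' \<subseteq> D" and "dominating_set V E D'"
    and deg: "\<And>v. v \<in> D \<Longrightarrow> 2 \<le> card (nbhd V E v - D)"
  shows "certified_dominating_set V E D'"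
  unfolding certified_dominating_set_def
proof (intro conjI ballI disjI2 \<open>dominating_set V E D'\<close>)
  fix v assume "v \<in> D'"
  have "card (nbhd V E v - D) \<le> card (nbhd V E v - D')"
    using \<open>D' \<subseteq> D\<close> finite_nbhd[OF G] by (auto intro: card_mono)
  with deg \<open>v \<in> D'\<close> \<open>D' \<subseteq> D\<close> show "2 \<le> card (nbhd V E v - D')"
    by force
qed

lemma minimal_dominating_set_if_minimal_certified:
  assumes G: "simple_graph V E" and md: "2 \<le> min_degree V E"
    and M: "minimal_certified_dominating_set V E D"
  shows "minimal_dominating_set V E D"
  unfolding minimal_dominating_set_def
proof (intro conjI allI impI notI)
  show "dominating_set V E D"
    using M by (simp add: minimal_certified_dominating_set_def certified_dominating_set_def)
next
  fix D' assume "D' \<subset> D" and "dominating_set V E D'"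
  then have "certified_dominating_set V E D'"
    using certified_dominating_set_subset[OF G _ _ card_nbhd_Diff_minimal_certified_ge_2[OF G md M]]
    by blast
  with \<open>D' \<subset> D\<close> M show False
    by (simp add: minimal_certified_dominating_set_def)
qed

lemma certified_dominating_set_if_independent:
  assumes G: "simple_graph V E" and md: "2 \<le> min_degree V E"
    and "dominating_set V E D" and ind: "independent_set V E D"
  shows "certified_dominating_set V E D"
  unfolding certified_dominating_set_def
proof (intro conjI ballI disjI2 \<open>dominating_set V E D\<close>)
  fix v assume "v \<in> D"
  with ind have "nbhd V E v - D = nbhd V E v" and "v \<in> V"
    by (auto simp: independent_set_def nbhd_def)
  with card_nbhd_ge_min_degree[OF G] md show "2 \<le> card (nbhd V E v - D)"
    by (metis le_trans)
qed

lemma minimal_certified_if_minimal_dominating: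
  assumes "minimal_dominating_set V E D" and "certified_dominating_set V E D"
  shows "minimal_certified_dominating_set V E D"
  using assms by (auto simp: minimal_certified_dominating_set_def minimal_dominating_set_def
      certified_dominating_set_def)

lemma upper_certified_domination_le_upper_domination:
  assumes G: "simple_graph V E" and md: "2 \<le> min_degree V E"
  shows "upper_certified_domination V E \<le> upper_domination V E"
proof -
  let ?cards = "card ` {D. minimal_certified_dominating_set V E D}"
  obtain D0 where "minimal_certified_dominating_set V E D0"
    using ex_minimal_certified_dominating_set[OF G] .
  then have "?cards \<noteq> {}"
    by blast
  then have "upper_certified_domination V E \<in> ?cards"
    unfolding upper_certified_domination_def
    using finite_minimal_certified_dominating_sets[OF G] by (intro Max_in) auto
  then obtain D where D: "minimal_certified_dominating_set V E D"
    and card: "upper_certified_domination V E = card D"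
    by blast
  have "minimal_dominating_set V E D"
    using minimal_dominating_set_if_minimal_certified[OF G md D] .
  then show ?thesis
    unfolding upper_domination_def card
    using finite_minimal_dominating_sets[OF G] by (intro Max_ge) auto
qed

lemma upper_domination_le_upper_certified_domination:
  assumes G: "simple_graph V E" and md: "2 \<le> min_degree V E"
    and "Gamma_set V E D" and "independent_set V E D"
  shows "upper_domination V E \<le> upper_certified_domination V E"
proof -
  have "minimal_dominating_set V E D" and card: "card D = upper_domination V E"
    using \<open>Gamma_set V E D\<close> by (auto simp: Gamma_set_def)
  then have "minimal_certified_dominating_set V E D"
    using minimal_certified_if_minimal_dominating certified_dominating_set_if_independent[OF G md]
      \<open>independent_set V E D\<close> by (auto simp: minimal_dominating_set_def)
  then show ?thesis
    unfolding upper_certified_domination_def card[symmetric]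
    using finite_minimal_certified_dominating_sets[OF G] by (intro Max_ge) auto
qed

theorem theorem3p5:
  fixes V :: "'a set" and E :: "'a \<Rightarrow> 'a \<Rightarrow> bool"
  assumes "simple_graph V E"
    and "connected_graph V E"
    and "min_degree V E \<ge> 2"
    and "\<exists>D. Gamma_set V E D \<and> independent_set V E D"
  shows "upper_domination V E = upper_certified_domination V E"
proof (rule antisym)
  obtain D where "Gamma_set V E D" and "independent_set V E D"
    using assms(4) by blast
  then show "upper_domination V E \<le> upper_certified_domination V E"
    using upper_domination_le_upper_certified_domination[OF assms(1,3)] by blast
  show "upper_certified_domination V E \<le> upper_domination V E"
    using upper_certified_domination_le_upper_domination[OF assms(1,3)] .
qed

end
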